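(* For every $\Lambda\in\mathcal{X}_d$, the set $T_\varepsilon(\Lambda)=\{t\in\mathbb{R}^{k+r-1}:a_t\Lambda\in\mathcal{S}_\varepsilon\}$ is discrete.
   Context: Let $k,r\ge1$, positive integers $m_1,\dots,m_k,n_1,\dots,n_r$, $d=\sum m_i+\sum n_j$, with fixed norms $\|\cdot\|$ on each $\mathbb{R}^{m_i},\mathbb{R}^{n_j}$, and $\mathbb{S}^l$ the unit sphere of the norm on $\mathbb{R}^l$. $\mathcal{X}_d$ is the space of unimodular lattices in $\mathbb{R}^d$. For $\varepsilon>0$, $L_\varepsilon=\{(x,y)\in(\mathbb{S}^{m_1}\times\cdots\times\mathbb{S}^{m_k}\times\mathbb{S}^{n_1}\times\cdots\times\mathbb{S}^{n_{r-1}})\times\mathbb{R}^{n_r}:\|y\|^{n_r}\le\varepsilon\}$ and $\mathcal{S}_\varepsilon$ is the set of $\Lambda\in\mathcal{X}_d$ having a primitive vector in $L_\varepsilon$. For $t\in\mathbb{R}^{k+r-1}$, $a_t=\mathrm{diag}\big(e^{t_1}I_{m_1},\dots,e^{t_k}I_{m_k},e^{-t_{k+1}}I_{n_1},\dots,e^{-t_{k+r-1}}I_{n_{r-1}},e^{(\sum_{i=1}^{r-1}n_it_{k+i}-\sum_{i=1}^km_it_i)/n_r}I_{n_r}\big)$. *)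

theory Defs
  imports "HOL-Analysis.Analysis" "HOL-Combinatorics.Permutations"
begin

text \<open>Conventions. A vector of R^l is represented as a function nat => real that
vanishes at every index >= l. Indices start at 0.\<close>

definition vec_in :: "nat \<Rightarrow> (nat \<Rightarrow> real) \<Rightarrow> bool" where
  "vec_in l x \<longleftrightarrow> (\<forall>j\<ge>l. x j = 0)"

definition is_norm_on :: "nat \<Rightarrow> ((nat \<Rightarrow> real) \<Rightarrow> real) \<Rightarrow> bool" where
  "is_norm_on l N \<longleftrightarrow>
     (\<forall>x. vec_in l x \<longrightarrow> N x \<ge> 0 \<and> (N x = 0 \<longleftrightarrow> x = (\<lambda>_. 0))) \<and>
     (\<forall>x c. vec_in l x \<longrightarrow> N (\<lambda>j. c * x j) = \<bar>c\<bar> * N x) \<and>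
     (\<forall>x y. vec_in l x \<longrightarrow> vec_in l y \<longrightarrow> N (\<lambda>j. x j + y j) \<le> N x + N y)"

definition det_n :: "nat \<Rightarrow> (nat \<Rightarrow> nat \<Rightarrow> real) \<Rightarrow> real" where
  "det_n d A = (\<Sum>\<sigma> | \<sigma> permutes {..<d}. of_int (sign \<sigma>) * (\<Prod>i<d. A i (\<sigma> i)))"

definition lattice_of :: "nat \<Rightarrow> (nat \<Rightarrow> nat \<Rightarrow> real) \<Rightarrow> (nat \<Rightarrow> real) set" where
  "lattice_of d b = {(\<lambda>j. \<Sum>i<d. of_int (c i) * b i j) | c :: nat \<Rightarrow> int. True}"

definition unimodular_lattices :: "nat \<Rightarrow> (nat \<Rightarrow> real) set set" where
  "unimodular_lattices d = {lattice_of d b | b. (\<forall>i<d. vec_in d (b i)) \<and> \<bar>det_n d b\<bar> = 1}"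

definition primitive_in :: "(nat \<Rightarrow> real) set \<Rightarrow> (nat \<Rightarrow> real) \<Rightarrow> bool" where
  "primitive_in L v \<longleftrightarrow> v \<in> L \<and> v \<noteq> (\<lambda>_. 0) \<and>
     (\<forall>w\<in>L. \<forall>c::real. w = (\<lambda>j. c * v j) \<longrightarrow> c \<in> \<int>)"

definition bsize :: "nat \<Rightarrow> (nat \<Rightarrow> nat) \<Rightarrow> (nat \<Rightarrow> nat) \<Rightarrow> nat \<Rightarrow> nat" where
  "bsize k m n i = (if i < k then m i else n (i - k))"

definition boff :: "nat \<Rightarrow> (nat \<Rightarrow> nat) \<Rightarrow> (nat \<Rightarrow> nat) \<Rightarrow> nat \<Rightarrow> nat" where
  "boff k m n i = (\<Sum>l<i. bsize k m n l)"

definition total_dim :: "nat \<Rightarrow> nat \<Rightarrow> (nat \<Rightarrow> nat) \<Rightarrow> (nat \<Rightarrow> nat) \<Rightarrow> nat" where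
  "total_dim k r m n = (\<Sum>i<k. m i) + (\<Sum>j<r. n j)"

definition blockv :: "nat \<Rightarrow> (nat \<Rightarrow> nat) \<Rightarrow> (nat \<Rightarrow> nat) \<Rightarrow> nat \<Rightarrow> (nat \<Rightarrow> real) \<Rightarrow> (nat \<Rightarrow> real)" where
  "blockv k m n i x = (\<lambda>j. if j < bsize k m n i then x (boff k m n i + j) else 0)"

text \<open>L_epsilon. Nm i is the norm on the i-th block (first the R^(m_i), then the R^(n_j)).\<close>
definition L_eps :: "nat \<Rightarrow> nat \<Rightarrow> (nat \<Rightarrow> nat) \<Rightarrow> (nat \<Rightarrow> nat) \<Rightarrow>
    (nat \<Rightarrow> (nat \<Rightarrow> real) \<Rightarrow> real) \<Rightarrow> real \<Rightarrow> (nat \<Rightarrow> real) set" where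
  "L_eps k r m n Nm \<epsilon> = {x. vec_in (total_dim k r m n) x \<and>
      (\<forall>i < k + r - 1. Nm i (blockv k m n i x) = 1) \<and>
      Nm (k + r - 1) (blockv k m n (k + r - 1) x) ^ n (r - 1) \<le> \<epsilon>}"

definition S_eps :: "nat \<Rightarrow> nat \<Rightarrow> (nat \<Rightarrow> nat) \<Rightarrow> (nat \<Rightarrow> nat) \<Rightarrow>
    (nat \<Rightarrow> (nat \<Rightarrow> real) \<Rightarrow> real) \<Rightarrow> real \<Rightarrow> (nat \<Rightarrow> real) set set" where
  "S_eps k r m n Nm \<epsilon> = {L \<in> unimodular_lattices (total_dim k r m n).
      \<exists>v. primitive_in L v \<and> v \<in> L_eps k r m n Nm \<epsilon>}"

text \<open>Scaling factor of a_t on block i; t is indexed by 0..k+r-2.\<close>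
definition afactor :: "nat \<Rightarrow> nat \<Rightarrow> (nat \<Rightarrow> nat) \<Rightarrow> (nat \<Rightarrow> nat) \<Rightarrow> (nat \<Rightarrow> real) \<Rightarrow> nat \<Rightarrow> real" where
  "afactor k r m n t i =
     (if i < k then exp (t i)
      else if i < k + r - 1 then exp (- t i)
      else exp (((\<Sum>l<r - 1. real (n l) * t (k + l)) - (\<Sum>l<k. real (m l) * t l)) / real (n (r - 1))))"

definition a_act :: "nat \<Rightarrow> nat \<Rightarrow> (nat \<Rightarrow> nat) \<Rightarrow> (nat \<Rightarrow> nat) \<Rightarrow> (nat \<Rightarrow> real) \<Rightarrow>
    (nat \<Rightarrow> real) \<Rightarrow> (nat \<Rightarrow> real)" where
  "a_act k r m n t x = (\<lambda>j. (\<Sum>i < k + r.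
      if boff k m n i \<le> j \<and> j < boff k m n (Suc i) then afactor k r m n t i else 0) * x j)"

definition T_eps :: "nat \<Rightarrow> nat \<Rightarrow> (nat \<Rightarrow> nat) \<Rightarrow> (nat \<Rightarrow> nat) \<Rightarrow>
    (nat \<Rightarrow> (nat \<Rightarrow> real) \<Rightarrow> real) \<Rightarrow> real \<Rightarrow> (nat \<Rightarrow> real) set \<Rightarrow> (nat \<Rightarrow> real) set" where
  "T_eps k r m n Nm \<epsilon> \<Lambda> = {t. vec_in (k + r - 1) t \<and>
      a_act k r m n t ` \<Lambda> \<in> S_eps k r m n Nm \<epsilon>}"

end

theory Submission
  imports Defs "Jordan_Normal_Form.Determinant"
begin

text \<open>If \<open>a\<^sub>t \<Lambda> \<in> S\<^sub>\<epsilon>\<close> is witnessed by \<open>a\<^sub>t v\<close> with \<open>v \<in> \<Lambda>\<close>, the conditions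
  \<open>\<parallel>(a\<^sub>t v)\<^sub>i\<parallel> = 1\<close> on the first \<open>k + r - 1\<close> blocks give \<open>\<parallel>v\<^sub>i\<parallel> = exp (- t\<^sub>i)\<close>
  resp. \<open>exp t\<^sub>i\<close>, so \<open>t\<close> is determined by \<open>v\<close>. For \<open>t\<close> in a bounded region the
  scaling factors of \<open>a\<^sub>t\<close> are bounded below, so all block norms of \<open>v\<close> are bounded, and by
  equivalence of norms \<open>v\<close> lies in a bounded box, which contains only finitely many points
  of \<open>\<Lambda>\<close>. Hence every bounded region meets \<open>T\<^sub>\<epsilon>(\<Lambda>)\<close> in a finite set.\<close>

section \<open>Norms on \<open>\<real>\<^sup>l\<close>\<close>

lemma is_norm_on_zero: "is_norm_on l N \<Longrightarrow> N (\<lambda>_. 0) = 0"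
  unfolding is_norm_on_def vec_in_def by auto

lemma is_norm_on_nonneg: "is_norm_on l N \<Longrightarrow> vec_in l x \<Longrightarrow> 0 \<le> N x"
  unfolding is_norm_on_def by blast

lemma is_norm_on_scale: "is_norm_on l N \<Longrightarrow> vec_in l x \<Longrightarrow> N (\<lambda>j. c * x j) = \<bar>c\<bar> * N x"
  unfolding is_norm_on_def by blast

lemma vec_in_sum: "finite S \<Longrightarrow> \<forall>j\<in>S. vec_in l (f j) \<Longrightarrow> vec_in l (\<lambda>i. \<Sum>j\<in>S. f j i)"
  unfolding vec_in_def by auto

lemma is_norm_on_sum_le:
  assumes N: "is_norm_on l N" and "finite S" and "\<forall>j\<in>S. vec_in l (f j)"
  shows "N (\<lambda>i. \<Sum>j\<in>S. f j i) \<le> (\<Sum>j\<in>S. N (f j))"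
  using assms(2,3)
proof (induction S rule: finite_induct)
  case empty
  then show ?case using is_norm_on_zero[OF N] by simp
next
  case (insert a S)
  have "N (\<lambda>i. \<Sum>j\<in>insert a S. f j i) = N (\<lambda>i. f a i + (\<Sum>j\<in>S. f j i))"
    using insert.hyps by simp
  also have "\<dots> \<le> N (f a) + N (\<lambda>i. \<Sum>j\<in>S. f j i)"
    using N insert vec_in_sum[of S l f] unfolding is_norm_on_def by auto
  also have "\<dots> \<le> N (f a) + (\<Sum>j\<in>S. N (f j))" using insert by auto
  finally show ?case using insert.hyps by simp
qed

lemma is_norm_on_le_coords:
  assumes N: "is_norm_on l N" and x: "vec_in l x"
  shows "N x \<le> (\<Sum>j<l. \<bar>x j\<bar> * N (\<lambda>i. if i = j then 1 else 0))"
proof -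
  let ?e = "\<lambda>j i. if i = j then 1 else (0::real)"
  have e: "vec_in l (?e j)" if "j < l" for j using that unfolding vec_in_def by auto
  have "x = (\<lambda>i. \<Sum>j<l. x j * ?e j i)"
    using x unfolding vec_in_def by (auto simp: if_distrib cong: if_cong)
  then have "N x \<le> (\<Sum>j<l. N (\<lambda>i. x j * ?e j i))"
    using is_norm_on_sum_le[OF N, of "{..<l}" "\<lambda>j i. x j * ?e j i"] e
    unfolding vec_in_def by auto
  also have "\<dots> = (\<Sum>j<l. \<bar>x j\<bar> * N (?e j))"
    using is_norm_on_scale[OF N e] by (intro sum.cong) auto
  finally show ?thesis .
qed

lemma is_norm_on_abs_diff_le:
  assumes N: "is_norm_on l N" and x: "vec_in l x" and y: "vec_in l y"
  shows "\<bar>N x - N y\<bar> \<le> N (\<lambda>j. x j - y j)"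
proof -
  have xy: "vec_in l (\<lambda>j. x j - y j)" and yx: "vec_in l (\<lambda>j. y j - x j)"
    using x y unfolding vec_in_def by auto
  have "N x = N (\<lambda>j. (x j - y j) + y j)" by simp
  also have "\<dots> \<le> N (\<lambda>j. x j - y j) + N y" using N xy y unfolding is_norm_on_def by blast
  finally have "N x - N y \<le> N (\<lambda>j. x j - y j)" by simp
  moreover have "N y = N (\<lambda>j. (y j - x j) + x j)" by simp
  then have "N y \<le> N (\<lambda>j. y j - x j) + N x" using N yx x unfolding is_norm_on_def by metis
  moreover have "N (\<lambda>j. (-1) * (x j - y j)) = \<bar>-1\<bar> * N (\<lambda>j. x j - y j)"
    by (rule is_norm_on_scale[OF N xy])
  then have "N (\<lambda>j. y j - x j) = N (\<lambda>j. x j - y j)" by simp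
  ultimately show ?thesis by linarith
qed

lemma is_norm_on_continuous_on:
  assumes N: "is_norm_on l N"
  shows "continuous_on {x. vec_in l x} N"
  unfolding continuous_on_def
proof (intro ballI)
  fix x assume "x \<in> {x. vec_in l x}"
  then have x: "vec_in l x" by simp
  let ?e = "\<lambda>j i. if i = j then 1 else (0::real)"
  have coord: "continuous_on UNIV (\<lambda>y::nat\<Rightarrow>real. y j)" for j by simp
  have "((\<lambda>y. \<Sum>j<l. \<bar>y j - x j\<bar> * N (?e j)) \<longlongrightarrow> (\<Sum>j<l. \<bar>x j - x j\<bar> * N (?e j)))
      (at x within {x. vec_in l x})"
    by (intro tendsto_intros continuous_on_tendsto_compose[OF coord])
       (auto intro: tendsto_ident_at)
  then have bound0: "((\<lambda>y. \<Sum>j<l. \<bar>y j - x j\<bar> * N (?e j)) \<longlongrightarrow> 0) (at x within {x. vec_in l x})"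
    by simp
  have "\<bar>N y - N x\<bar> \<le> (\<Sum>j<l. \<bar>y j - x j\<bar> * N (?e j))" if "vec_in l y" for y
  proof -
    have "vec_in l (\<lambda>j. y j - x j)" using x that unfolding vec_in_def by auto
    then show ?thesis
      using is_norm_on_abs_diff_le[OF N that x] is_norm_on_le_coords[OF N] by fastforce
  qed
  then have "((\<lambda>y. N y - N x) \<longlongrightarrow> 0) (at x within {x. vec_in l x})"
    by (intro tendsto_0_le[OF bound0, of _ 1])
       (auto simp: eventually_at_filter intro!: always_eventually order_trans[OF _ abs_ge_self])
  then show "(N \<longlongrightarrow> N x) (at x within {x. vec_in l x})" by (rule LIM_zero_cancel)
qed

lemma compact_l1_sphere: "compact {x::nat \<Rightarrow> real. vec_in l x \<and> (\<Sum>j<l. \<bar>x j\<bar>) = 1}"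
  (is "compact ?K")
proof -
  have "?K = (\<Inter>j\<in>{l..}. {x. x j = 0}) \<inter> {x. (\<Sum>j<l. \<bar>x j\<bar>) = 1}"
    unfolding vec_in_def by auto
  also have "closed \<dots>"
    by (intro closed_Int closed_INT ballI closed_Collect_eq continuous_intros) simp_all
  finally have "closed ?K" .
  define P where "P = PiE UNIV (\<lambda>i. if i < l then cbox (-1) (1::real) else {0})"
  have "compactin (product_topology (\<lambda>i. euclidean) UNIV) P"
    unfolding P_def by (subst compactin_PiE) auto
  then have "compact P" by (simp add: euclidean_product_topology)
  have "?K \<subseteq> P"
  proof
    fix x assume x: "x \<in> ?K"
    have "\<bar>x i\<bar> \<le> 1" if "i < l" for i
      using member_le_sum[of i "{..<l}" "\<lambda>j. \<bar>x j\<bar>"] that x by auto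
    then show "x \<in> P" using x unfolding P_def vec_in_def by (auto simp: abs_le_iff)
  qed
  then show ?thesis
    using compact_Int_closed[OF \<open>compact P\<close> \<open>closed ?K\<close>] by (simp add: Int_absorb1)
qed

lemma is_norm_on_l1_lower_bound:
  assumes N: "is_norm_on l N"
  obtains c where "c > 0" and "\<And>x. vec_in l x \<Longrightarrow> c * (\<Sum>j<l. \<bar>x j\<bar>) \<le> N x"
proof (cases "l = 0")
  case True
  then show ?thesis using that[of 1] is_norm_on_nonneg[OF N] by simp
next
  case False
  define K where "K = {x::nat \<Rightarrow> real. vec_in l x \<and> (\<Sum>j<l. \<bar>x j\<bar>) = 1}"
  have "(\<lambda>i. if i = 0 then 1 else 0) \<in> K" using False unfolding K_def vec_in_def by auto
  then have "K \<noteq> {}" by blast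
  moreover have "continuous_on K N"
    using is_norm_on_continuous_on[OF N] by (rule continuous_on_subset) (auto simp: K_def)
  ultimately obtain x0 where x0: "x0 \<in> K" and x0_min: "\<And>y. y \<in> K \<Longrightarrow> N x0 \<le> N y"
    using continuous_attains_inf[OF compact_l1_sphere[of l, folded K_def]] by blast
  have "x0 \<noteq> (\<lambda>_. 0)" using x0 unfolding K_def by auto
  then have pos: "N x0 > 0"
    using N x0 unfolding K_def is_norm_on_def by (metis (mono_tags) mem_Collect_eq order_le_less)
  show ?thesis
  proof (rule that[OF pos])
    fix x assume x: "vec_in l x"
    define s where "s = (\<Sum>j<l. \<bar>x j\<bar>)"
    show "N x0 * (\<Sum>j<l. \<bar>x j\<bar>) \<le> N x"
    proof (cases "s = 0")
      case True
      then show ?thesis using is_norm_on_nonneg[OF N x] unfolding s_def by simp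
    next
      case False
      moreover have "s \<ge> 0" unfolding s_def by (simp add: sum_nonneg)
      ultimately have "s > 0" by simp
      have "(\<lambda>j. (1/s) * x j) \<in> K"
        using x \<open>s > 0\<close> unfolding K_def s_def vec_in_def by (auto simp: abs_mult simp flip: sum_divide_distrib)
      then have "N x0 \<le> N (\<lambda>j. (1/s) * x j)" by (rule x0_min)
      also have "\<dots> = (1/s) * N x" using \<open>s > 0\<close> by (subst is_norm_on_scale[OF N x]) simp
      finally show ?thesis using \<open>s > 0\<close> unfolding s_def by (simp add: field_simps)
    qed
  qed
qed

section \<open>Lattice points in a box\<close>

lemma det_n_eq_det: "det_n d b = det (mat d d (\<lambda>(i, j). b i j))"
  unfolding det_def det_n_def
  by (auto simp: atLeast0LessThan intro!: sum.cong prod.cong dest: permutes_in_image)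

lemma det_n_nonzero_imp_left_inverse:
  assumes "det_n d b \<noteq> 0"
  obtains M where "\<And>i i'. i < d \<Longrightarrow> i' < d \<Longrightarrow> (\<Sum>j<d. M i j * b i' j) = (if i = i' then 1 else 0)"
proof -
  define B where "B = mat d d (\<lambda>(i, j). b i j)"
  have B: "B \<in> carrier_mat d d" unfolding B_def by simp
  have "det B \<noteq> 0" using assms unfolding B_def det_n_eq_det .
  from det_non_zero_imp_unit[OF B this, of "()"]
  obtain B' where B': "B' \<in> carrier_mat d d" "B * B' = 1\<^sub>m d"
    unfolding Units_def ring_mat_def by auto
  show ?thesis
  proof (rule that)
    fix i i' assume "i < d" "i' < d"
    then have "(\<Sum>j<d. b i' j * B' $$ (j, i)) = (B * B') $$ (i', i)"
      using B'(1) by (simp add: index_mult_mat B_def scalar_prod_def atLeast0LessThan)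
    also have "\<dots> = (if i = i' then 1 else 0)" using B' \<open>i < d\<close> \<open>i' < d\<close> by auto
    finally show "(\<Sum>j<d. B' $$ (j, i) * b i' j) = (if i = i' then 1 else 0)"
      by (simp add: mult.commute)
  qed
qed

lemma finite_lattice_of_Int_box:
  assumes "det_n d b \<noteq> 0"
  shows "finite (lattice_of d b \<inter> {x. \<forall>j<d. \<bar>x j\<bar> \<le> R})"
proof -
  obtain M where M: "\<And>i i'. i < d \<Longrightarrow> i' < d \<Longrightarrow> (\<Sum>j<d. M i j * b i' j) = (if i = i' then 1 else 0)"
    using det_n_nonzero_imp_left_inverse[OF assms] by blast
  define Z where "Z = \<lceil>(\<Sum>i<d. \<Sum>j<d. \<bar>M i j\<bar>) * \<bar>R\<bar>\<rceil>"
  define L where "L = (\<lambda>c::nat \<Rightarrow> int. \<lambda>j. \<Sum>i<d. of_int (c i) * b i j)"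
  have "lattice_of d b \<inter> {x. \<forall>j<d. \<bar>x j\<bar> \<le> R} \<subseteq> L ` PiE {..<d} (\<lambda>_. {-Z..Z})"
  proof
    fix x assume x: "x \<in> lattice_of d b \<inter> {x. \<forall>j<d. \<bar>x j\<bar> \<le> R}"
    then obtain c where xc: "x = L c" unfolding lattice_of_def L_def by auto
    have "c i \<in> {-Z..Z}" if i: "i < d" for i
    proof -
      have "(\<Sum>j<d. M i j * x j) = (\<Sum>i'<d. of_int (c i') * (\<Sum>j<d. M i j * b i' j))"
        unfolding xc L_def sum_distrib_left by (subst sum.swap) (simp add: algebra_simps)
      also have "\<dots> = (\<Sum>i'<d. of_int (c i') * (if i = i' then 1 else 0))"
        using M i by (intro sum.cong) auto
      also have "\<dots> = of_int (c i)" using i by (simp add: if_distrib cong: if_cong)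
      finally have "of_int (c i) = (\<Sum>j<d. M i j * x j)" ..
      also have "\<bar>\<dots>\<bar> \<le> (\<Sum>j<d. \<bar>M i j\<bar>) * \<bar>R\<bar>"
        using x by (intro order_trans[OF sum_abs])
          (force simp: abs_mult sum_distrib_right intro!: sum_mono mult_left_mono)
      also have "\<dots> \<le> (\<Sum>i<d. \<Sum>j<d. \<bar>M i j\<bar>) * \<bar>R\<bar>"
        by (intro mult_right_mono member_le_sum[where f="\<lambda>i. \<Sum>j<d. \<bar>M i j\<bar>"]) (use i in auto)
      finally have "\<bar>of_int (c i)\<bar> \<le> real_of_int Z"
        unfolding Z_def using le_of_int_ceiling order_trans by blast
      then show ?thesis by (simp add: abs_le_iff)
    qed
    then have "restrict c {..<d} \<in> PiE {..<d} (\<lambda>_. {-Z..Z})" by auto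
    moreover have "L (restrict c {..<d}) = L c" unfolding L_def by (intro ext sum.cong) auto
    ultimately show "x \<in> L ` PiE {..<d} (\<lambda>_. {-Z..Z})" using xc by (metis image_eqI)
  qed
  moreover have "finite (L ` PiE {..<d} (\<lambda>_. {-Z..Z}))"
    by (intro finite_imageI finite_PiE) auto
  ultimately show ?thesis by (rule finite_subset)
qed

lemma finite_unimodular_lattice_Int_box:
  assumes "\<Lambda> \<in> unimodular_lattices d"
  shows "finite (\<Lambda> \<inter> {x. \<forall>j<d. \<bar>x j\<bar> \<le> R})"
  using assms finite_lattice_of_Int_box unfolding unimodular_lattices_def by force

section \<open>Block decomposition and the diagonal action\<close>

lemma boff_Suc: "boff k m n (Suc i) = boff k m n i + bsize k m n i"
  unfolding boff_def by simp

lemma boff_mono: "i \<le> i' \<Longrightarrow> boff k m n i \<le> boff k m n i'"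
  unfolding boff_def by (rule sum_mono2) auto

lemma boff_last: "boff k m n (k + r) = total_dim k r m n"
  by (induction r) (simp_all add: boff_def bsize_def total_dim_def)

lemma block_containing:
  assumes "j < boff k m n N"
  obtains i where "i < N" "boff k m n i \<le> j" "j < boff k m n (Suc i)"
  using assms
proof (induction N)
  case 0
  then show ?case unfolding boff_def by simp
next
  case (Suc N)
  show ?case
  proof (cases "j < boff k m n N")
    case True
    then show ?thesis using Suc.IH Suc.prems(1) less_SucI by blast
  next
    case False
    then show ?thesis using Suc.prems(1)[of N] Suc.prems(2) by simp
  qed
qed

lemma a_act_block_entry:
  assumes i: "i < k + r" and j: "j < bsize k m n i"
  shows "a_act k r m n t x (boff k m n i + j) = afactor k r m n t i * x (boff k m n i + j)"
proof -
  have block_iff: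
    "boff k m n i' \<le> boff k m n i + j \<and> boff k m n i + j < boff k m n (Suc i') \<longleftrightarrow> i' = i" for i'
  proof (cases i' i rule: linorder_cases)
    case less
    then have "boff k m n (Suc i') \<le> boff k m n i" by (intro boff_mono) auto
    then show ?thesis using less by auto
  next
    case greater
    then have "boff k m n (Suc i) \<le> boff k m n i'" by (intro boff_mono) auto
    then show ?thesis using greater j by (auto simp: boff_Suc)
  qed (use j in \<open>auto simp: boff_Suc\<close>)
  show ?thesis
    unfolding a_act_def block_iff using i by simp
qed

lemma blockv_a_act:
  "i < k + r \<Longrightarrow> blockv k m n i (a_act k r m n t x) = (\<lambda>j. afactor k r m n t i * blockv k m n i x j)"
  unfolding blockv_def using a_act_block_entry by auto

lemma vec_in_blockv: "vec_in (bsize k m n i) (blockv k m n i x)"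
  unfolding vec_in_def blockv_def by auto

lemma afactor_pos: "afactor k r m n t i > 0"
  by (simp add: afactor_def)

lemma norm_blockv_a_act:
  assumes "i < k + r" and "is_norm_on (bsize k m n i) N"
  shows "N (blockv k m n i (a_act k r m n t x)) = afactor k r m n t i * N (blockv k m n i x)"
  using is_norm_on_scale[OF assms(2) vec_in_blockv] afactor_pos
  unfolding blockv_a_act[OF assms(1)] by (simp add: less_imp_le)

lemma coords_le_if_block_norms_le:
  assumes "\<forall>i<k + r. is_norm_on (bsize k m n i) (Nm i)"
  obtains C where "\<And>v R j. \<forall>i<k + r. Nm i (blockv k m n i v) \<le> R \<Longrightarrow> j < total_dim k r m n
    \<Longrightarrow> \<bar>v j\<bar> \<le> C * R"
proof -
  have "\<forall>i<k + r. \<exists>c>0. \<forall>x. vec_in (bsize k m n i) x \<longrightarrow> c * (\<Sum>j<bsize k m n i. \<bar>x j\<bar>) \<le> Nm i x"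
    using assms is_norm_on_l1_lower_bound by metis
  then obtain c where c_pos: "\<And>i. i < k + r \<Longrightarrow> c i > 0"
    and c_le: "\<And>i x. i < k + r \<Longrightarrow> vec_in (bsize k m n i) x
      \<Longrightarrow> c i * (\<Sum>j<bsize k m n i. \<bar>x j\<bar>) \<le> Nm i x"
    by metis
  show ?thesis
  proof (rule that)
    fix v R j assume R: "\<forall>i<k + r. Nm i (blockv k m n i v) \<le> R" and j: "j < total_dim k r m n"
    obtain i where i: "i < k + r" "boff k m n i \<le> j" "j < boff k m n (Suc i)"
      using block_containing[of j k m n "k + r"] j by (auto simp: boff_last)
    define j' where "j' = j - boff k m n i"
    have j': "j' < bsize k m n i" "j = boff k m n i + j'" using i unfolding j'_def by (auto simp: boff_Suc)
    have "\<bar>v j\<bar> \<le> (\<Sum>j<bsize k m n i. \<bar>blockv k m n i v j\<bar>)"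
      using member_le_sum[of j' "{..<bsize k m n i}" "\<lambda>j. \<bar>blockv k m n i v j\<bar>"] j'
      by (simp add: blockv_def)
    then have "c i * \<bar>v j\<bar> \<le> Nm i (blockv k m n i v)"
      using c_pos[OF i(1)] c_le[OF i(1) vec_in_blockv] by (meson less_imp_le mult_left_mono order_trans)
    also have "\<dots> \<le> R" using R i(1) by blast
    finally have le_R: "c i * \<bar>v j\<bar> \<le> R" .
    have "0 \<le> R" using le_R c_pos[OF i(1)] by (meson abs_ge_zero less_imp_le mult_nonneg_nonneg order_trans)
    have "\<bar>v j\<bar> \<le> R * (1 / c i)" using le_R c_pos[OF i(1)] by (simp add: field_simps)
    also have "\<dots> \<le> R * (\<Sum>i<k + r. 1 / c i)"
      using \<open>0 \<le> R\<close> c_pos i(1) by (intro mult_left_mono member_le_sum) (auto simp: less_imp_le)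
    finally show "\<bar>v j\<bar> \<le> (\<Sum>i<k + r. 1 / c i) * R" by (simp add: mult.commute)
  qed
qed

lemma finite_unimodular_lattice_Int_block_norms_le:
  assumes "\<forall>i<k + r. is_norm_on (bsize k m n i) (Nm i)"
    and "\<Lambda> \<in> unimodular_lattices (total_dim k r m n)"
  shows "finite (\<Lambda> \<inter> {v. \<forall>i<k + r. Nm i (blockv k m n i v) \<le> R})"
proof -
  obtain C where C: "\<And>v R j. \<forall>i<k + r. Nm i (blockv k m n i v) \<le> R \<Longrightarrow> j < total_dim k r m n
    \<Longrightarrow> \<bar>v j\<bar> \<le> C * R"
    using coords_le_if_block_norms_le[OF assms(1)] by blast
  have "\<Lambda> \<inter> {v. \<forall>i<k + r. Nm i (blockv k m n i v) \<le> R}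
      \<subseteq> \<Lambda> \<inter> {x. \<forall>j<total_dim k r m n. \<bar>x j\<bar> \<le> C * R}"
    using C by blast
  then show ?thesis by (rule finite_subset[OF _ finite_unimodular_lattice_Int_box[OF assms(2)]])
qed

lemma abs_sum_weighted_le:
  assumes "\<forall>l\<in>S. \<bar>f l\<bar> \<le> A"
  shows "\<bar>\<Sum>l\<in>S. real (w l) * f l\<bar> \<le> (\<Sum>l\<in>S. real (w l)) * A"
  using assms by (intro order_trans[OF sum_abs])
    (auto simp: abs_mult sum_distrib_right intro!: sum_mono mult_left_mono)

lemma afactor_ge_exp:
  assumes "r \<ge> 1" and "n (r - 1) \<ge> 1" and "0 \<le> A" and t: "\<forall>i<k + r - 1. \<bar>t i\<bar> \<le> A"
  shows "exp (- ((1 + (\<Sum>l<r - 1. real (n l)) + (\<Sum>l<k. real (m l))) * A)) \<le> afactor k r m n t i"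
proof -
  define S where "S = (\<Sum>l<r - 1. real (n l)) + (\<Sum>l<k. real (m l))"
  have "0 \<le> S" unfolding S_def by (simp add: sum_nonneg)
  define E where "E = ((\<Sum>l<r - 1. real (n l) * t (k + l)) - (\<Sum>l<k. real (m l) * t l)) / real (n (r - 1))"
  have "\<bar>E\<bar> \<le> \<bar>(\<Sum>l<r - 1. real (n l) * t (k + l)) - (\<Sum>l<k. real (m l) * t l)\<bar>"
    unfolding E_def abs_divide using assms(2) by (simp add: divide_le_eq mult_le_cancel_left1)
  also have "\<dots> \<le> S * A"
    using abs_sum_weighted_le[of "{..<r - 1}" "\<lambda>l. t (k + l)" A n]
      abs_sum_weighted_le[of "{..<k}" t A m] t assms(1)
    unfolding S_def distrib_right by (force intro: abs_triangle_ineq4[THEN order_trans])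
  finally have "\<bar>E\<bar> \<le> S * A" .
  then have "- ((1 + S) * A) \<le> ln (afactor k r m n t i)"
    using assms(1) t \<open>0 \<le> S\<close> \<open>0 \<le> A\<close> unfolding afactor_def E_def[symmetric]
    by (auto simp: algebra_simps mult_nonneg_nonneg)
  then show ?thesis
    using afactor_pos[of k r m n t i] by (simp add: ln_ge_iff S_def add.assoc)
qed

lemma L_eps_block_norm_le:
  assumes "r \<ge> 1" and "n (r - 1) \<ge> 1" and N: "\<forall>i<k + r. is_norm_on (bsize k m n i) (Nm i)"
    and x: "x \<in> L_eps k r m n Nm \<epsilon>" and i: "i < k + r"
  shows "Nm i (blockv k m n i x) \<le> max 1 \<epsilon>"
proof (cases "i < k + r - 1")
  case True
  then show ?thesis using x unfolding L_eps_def by simp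
next
  case False
  with i assms(1) have i_last: "i = k + r - 1" by simp
  define y where "y = Nm i (blockv k m n i x)"
  have "0 \<le> y" unfolding y_def using is_norm_on_nonneg[OF _ vec_in_blockv] N i by blast
  have "y ^ n (r - 1) \<le> \<epsilon>" using x i_last unfolding L_eps_def y_def by simp
  moreover have "y \<le> y ^ n (r - 1)" if "1 < y"
    using power_increasing[of 1 "n (r - 1)" y] that assms(2) by simp
  ultimately show ?thesis unfolding y_def[symmetric] by linarith
qed

definition log_block_norms ::
    "nat \<Rightarrow> nat \<Rightarrow> (nat \<Rightarrow> nat) \<Rightarrow> (nat \<Rightarrow> nat) \<Rightarrow> (nat \<Rightarrow> (nat \<Rightarrow> real) \<Rightarrow> real) \<Rightarrow>
      (nat \<Rightarrow> real) \<Rightarrow> (nat \<Rightarrow> real)" where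
  "log_block_norms k r m n Nm v = (\<lambda>i.
     if i < k then - ln (Nm i (blockv k m n i v))
     else if i < k + r - 1 then ln (Nm i (blockv k m n i v)) else 0)"

lemma a_act_in_L_eps_imp_eq_log_block_norms:
  assumes "r \<ge> 1" and N: "\<forall>i<k + r. is_norm_on (bsize k m n i) (Nm i)"
    and t: "vec_in (k + r - 1) t" and w: "a_act k r m n t v \<in> L_eps k r m n Nm \<epsilon>"
  shows "t = log_block_norms k r m n Nm v"
proof
  fix i
  show "t i = log_block_norms k r m n Nm v i"
  proof (cases "i < k + r - 1")
    case True
    then have "afactor k r m n t i * Nm i (blockv k m n i v) = 1"
      using w N norm_blockv_a_act[of i k r m n "Nm i" t v] unfolding L_eps_def by simp
    then have "Nm i (blockv k m n i v) = exp (if i < k then - t i else t i)"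
      using True unfolding afactor_def by (auto simp: exp_minus field_simps)
    then show ?thesis using True unfolding log_block_norms_def by simp
  next
    case False
    then show ?thesis using t assms(1) unfolding log_block_norms_def vec_in_def by auto
  qed
qed

lemma finite_T_eps_Int_box:
  assumes "r \<ge> 1" and "n (r - 1) \<ge> 1" and "0 \<le> A"
    and N: "\<forall>i<k + r. is_norm_on (bsize k m n i) (Nm i)"
    and \<Lambda>: "\<Lambda> \<in> unimodular_lattices (total_dim k r m n)"
  shows "finite (T_eps k r m n Nm \<epsilon> \<Lambda> \<inter> {t. \<forall>i<k + r - 1. \<bar>t i\<bar> \<le> A})"
proof -
  define B where "B = exp ((1 + (\<Sum>l<r - 1. real (n l)) + (\<Sum>l<k. real (m l))) * A)"
  define V where "V = \<Lambda> \<inter> {v. \<forall>i<k + r. Nm i (blockv k m n i v) \<le> max 1 \<epsilon> * B}"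
  have "T_eps k r m n Nm \<epsilon> \<Lambda> \<inter> {t. \<forall>i<k + r - 1. \<bar>t i\<bar> \<le> A} \<subseteq> log_block_norms k r m n Nm ` V"
  proof
    fix t assume "t \<in> T_eps k r m n Nm \<epsilon> \<Lambda> \<inter> {t. \<forall>i<k + r - 1. \<bar>t i\<bar> \<le> A}"
    then have t: "vec_in (k + r - 1) t" "a_act k r m n t ` \<Lambda> \<in> S_eps k r m n Nm \<epsilon>"
      and t_box: "\<forall>i<k + r - 1. \<bar>t i\<bar> \<le> A"
      unfolding T_eps_def by auto
    then obtain v where v: "v \<in> \<Lambda>" and w: "a_act k r m n t v \<in> L_eps k r m n Nm \<epsilon>"
      unfolding S_eps_def primitive_in_def by auto
    have "Nm i (blockv k m n i v) \<le> max 1 \<epsilon> * B" if i: "i < k + r" for i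
    proof -
      have "afactor k r m n t i * Nm i (blockv k m n i v) \<le> max 1 \<epsilon>"
        using L_eps_block_norm_le[OF assms(1,2) N w i] norm_blockv_a_act[OF i] N i by simp
      moreover have "1 / B \<le> afactor k r m n t i"
        using afactor_ge_exp[where r=r and n=n and k=k and m=m and i=i, OF assms(1,2,3) t_box]
        unfolding B_def by (simp add: exp_minus inverse_eq_divide)
      moreover have "0 \<le> Nm i (blockv k m n i v)"
        using is_norm_on_nonneg[OF _ vec_in_blockv] N i by blast
      ultimately have "(1 / B) * Nm i (blockv k m n i v) \<le> max 1 \<epsilon>"
        by (meson mult_right_mono order_trans)
      then show ?thesis unfolding B_def by (simp add: divide_le_eq mult.commute)
    qed
    moreover have "t = log_block_norms k r m n Nm v"
      using a_act_in_L_eps_imp_eq_log_block_norms[OF assms(1) N t(1) w] .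
    ultimately show "t \<in> log_block_norms k r m n Nm ` V" using v unfolding V_def by blast
  qed
  moreover have "finite V"
    unfolding V_def by (rule finite_unimodular_lattice_Int_block_norms_le[OF N \<Lambda>])
  ultimately show ?thesis by (meson finite_imageI finite_subset)
qed

lemma isolated_in_if_finite_Int_open:
  fixes S :: "'a::t1_space set"
  assumes "x \<in> S" and "open U" and "x \<in> U" and "finite (U \<inter> S)"
  shows "x isolated_in S"
proof -
  have "\<not> x islimpt S"
  proof
    assume "x islimpt S"
    then have "x islimpt S \<inter> U"
      by (rule islimpt_Int_eventually[OF _ eventually_at_in_open'[OF assms(2,3)]])
    then show False using islimpt_finite assms(4) by (metis Int_commute)
  qed
  then show ?thesis using assms(1) by (simp add: isolated_in_islimpt_iff)
qed

theorem lemma5p1: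
  fixes k r :: nat and m n :: "nat \<Rightarrow> nat"
    and Nm :: "nat \<Rightarrow> (nat \<Rightarrow> real) \<Rightarrow> real"
    and \<epsilon> :: real and \<Lambda> :: "(nat \<Rightarrow> real) set"
  assumes "k \<ge> 1" and "r \<ge> 1"
    and "\<forall>i<k. m i \<ge> 1" and "\<forall>j<r. n j \<ge> 1"
    and "\<forall>i<k + r. is_norm_on (bsize k m n i) (Nm i)"
    and "\<epsilon> > 0"
    and "\<Lambda> \<in> unimodular_lattices (total_dim k r m n)"
  shows "discrete (T_eps k r m n Nm \<epsilon> \<Lambda>)"
proof (rule discreteI)
  fix t0 assume t0: "t0 \<in> T_eps k r m n Nm \<epsilon> \<Lambda>"
  define A where "A = (\<Sum>i<k + r - 1. \<bar>t0 i\<bar>) + 1"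
  define U where "U = {t. \<forall>i\<in>{..<k + r - 1}. t i \<in> ball (t0 i) 1}"
  have "open U"
    using product_topology_basis'[of "{..<k + r - 1}" "\<lambda>i. ball (t0 i) 1" id] by (simp add: U_def)
  have U_box: "U \<subseteq> {t. \<forall>i<k + r - 1. \<bar>t i\<bar> \<le> A}"
  proof (clarify)
    fix t i assume "t \<in> U" "i < k + r - 1"
    then have "\<bar>t i - t0 i\<bar> < 1" "\<bar>t0 i\<bar> \<le> (\<Sum>i<k + r - 1. \<bar>t0 i\<bar>)"
      unfolding U_def by (auto simp: dist_real_def abs_minus_commute intro: member_le_sum)
    then show "\<bar>t i\<bar> \<le> A" unfolding A_def by linarith
  qed
  have "0 \<le> A" unfolding A_def by (simp add: add_nonneg_nonneg sum_nonneg)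
  moreover have "n (r - 1) \<ge> 1" using assms(2,4) by simp
  ultimately have "finite (T_eps k r m n Nm \<epsilon> \<Lambda> \<inter> {t. \<forall>i<k + r - 1. \<bar>t i\<bar> \<le> A})"
    using finite_T_eps_Int_box[OF assms(2) _ _ assms(5,7)] by blast
  then have "finite (U \<inter> T_eps k r m n Nm \<epsilon> \<Lambda>)"
    by (rule finite_subset[rotated]) (use U_box in blast)
  then show "t0 isolated_in T_eps k r m n Nm \<epsilon> \<Lambda>"
    using isolated_in_if_finite_Int_open[OF t0 \<open>open U\<close>] by (simp add: U_def)
qed

end
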